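(* Let $k\in\mathbb N$ with $k\geq 3$. The family of sets $R_{i,j}$ with $i\in\{k-3,k-2\}$ and $j\in\mathbb Z$ satisfying $-F(i+1)\geq j\geq 1-F(k)$ (the $k$-th standard Fibonacci-like partition of the second kind) consists of $F(k)$ sets which are pairwise disjoint and whose union is $\{n\in\mathbb N\mid n\geq F(k)\}$.
   Context: $\mathbb N=\{1,2,\dots\}$, $\varphi=\frac{1+\sqrt5}{2}$, $a(n)=\lfloor n\varphi\rfloor$. $F$ is the Fibonacci sequence with $F(0)=0$, $F(1)=F(2)=1$, $F(n)=F(n-1)+F(n-2)$. For $i\in\mathbb Z^{\geq 0}$, $j\in\mathbb Z$: $f_{i,j}(n)=F(i+1)a(n)+F(i)n-j$ ($n\in\mathbb N$) and $R_{i,j}=\{f_{i,j}(n)\mid n\in\mathbb N\}$. *)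

theory Defs
  imports Complex_Main "HOL-Number_Theory.Fib"
begin

definition phi :: real where
  "phi = (1 + sqrt 5) / 2"

definition a :: "nat \<Rightarrow> int" where
  "a n = \<lfloor>real n * phi\<rfloor>"

(* f_{i,j}(n) = F(i+1) a(n) + F(i) n - j, with F = fib (fib 0 = 0, fib 1 = fib 2 = 1) *)
definition f :: "nat \<Rightarrow> int \<Rightarrow> nat \<Rightarrow> int" where
  "f i j n = int (fib (i + 1)) * a n + int (fib i) * int n - j"

definition R :: "nat \<Rightarrow> int \<Rightarrow> int set" where
  "R i j = {f i j n | n. n \<ge> 1}"

end

theory Submission
  imports Defs "HOL-Computational_Algebra.Nth_Powers"
begin

(* Let s = k - 3 and g_i(n) = f_{i,0}(n), so that R_{i,j} = {g_i(n) - j | n >= 1}. Two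
   properties of the lower Wythoff sequence a, both consequences of phi^2 = phi + 1 and the
   irrationality of phi, drive the proof: a(n+1) - a(n) is 2 if n = a(m) for some m >= 1 and 1
   otherwise, and a(a(m)) = a(m) + m - 1. The first makes the steps of g_s equal to F(s+2), or
   to F(s+3) at the points a(m); the second gives g_{s+1}(m) = g_s(a(m)) + F(s+1). Hence the
   windows [g_s(n) + F(s+1), g_s(n+1) + F(s+1)), n >= 1, tile the integers >= F(s+3) = F(k):
   the sets R_{s,j} fill the first F(s+2) places of every window, and the sets R_{s+1,j} fill
   the remaining F(s+1) places of the long windows, those at n = a(m). *)

section \<open>The lower Wythoff sequence\<close>

lemma phi_squared: "phi * phi = phi + 1"
  unfolding phi_def by (simp add: field_simps)

lemma phi_gt_1: "1 < phi" and phi_less_2: "phi < 2"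
proof -
  have "2 < sqrt (5::real)" "sqrt (5::real) < 3"
    by (simp_all add: real_less_rsqrt real_less_lsqrt)
  then show "1 < phi" "phi < 2" by (simp_all add: phi_def)
qed

lemma five_not_square: "\<not> is_square (5 :: int)"
proof
  assume "is_square (5 :: int)"
  then obtain y :: int where y: "\<bar>y\<bar> ^ 2 = 5" by (auto elim: is_nth_powerE)
  show False
  proof (cases "\<bar>y\<bar> \<le> 2")
    case True
    then have "\<bar>y\<bar> ^ 2 \<le> 2 ^ 2" by (intro power_mono) auto
    then show False using y by simp
  next
    case False
    then have "3 ^ 2 \<le> \<bar>y\<bar> ^ 2" by (intro power_mono) auto
    then show False using y by simp
  qed
qed

lemma of_nat_mult_phi_not_Ints:
  assumes "n > 0" shows "real n * phi \<notin> \<int>"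
proof
  assume "real n * phi \<in> \<int>"
  then obtain c where "real n * phi = of_int c" by (elim Ints_cases)
  then have "real n * sqrt 5 = of_int (2 * c - int n)" by (simp add: phi_def field_simps)
  then have "real_of_int ((2 * c - int n) ^ 2) = (real n * sqrt 5) ^ 2" by simp
  also have "\<dots> = real_of_int (5 * int n ^ 2)" by (simp add: power_mult_distrib)
  finally have "5 * int n ^ 2 = (2 * c - int n) ^ 2" by (simp only: of_int_eq_iff)
  then have "is_square (5 * int n ^ 2)" by (rule is_nth_powerI)
  moreover have "is_square (int n ^ 2)" "int n ^ 2 \<noteq> 0" using assms by auto
  ultimately show False using five_not_square is_nth_power_mult_cancel_right by blast
qed

lemma frac_mult_phi_pos: "n > 0 \<Longrightarrow> 0 < frac (real n * phi)"
  by (simp add: of_nat_mult_phi_not_Ints)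

lemma a_eq: "of_int (a n) = real n * phi - frac (real n * phi)"
  by (simp add: a_def frac_def)

lemma a_ge: "int n \<le> a n"
proof -
  have "real n * 1 \<le> real n * phi" using phi_gt_1 by (intro mult_left_mono) auto
  then show ?thesis by (simp add: a_def le_floor_iff)
qed

lemma a_Suc: "a (Suc n) = a n + (if frac (real n * phi) < 2 - phi then 1 else 2)"
proof -
  define \<theta> where "\<theta> = frac (real n * phi)"
  have "real (Suc n) * phi = of_int (a n) + (\<theta> + phi)"
    by (simp add: a_eq \<theta>_def algebra_simps)
  moreover have "0 \<le> \<theta>" "\<theta> < 1" by (simp_all add: \<theta>_def frac_lt_1)
  ultimately show ?thesis
    using phi_gt_1 phi_less_2 unfolding a_def \<theta>_def[symmetric]
    by (intro floor_unique) (auto split: if_split)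
qed

lemma a_mult_phi: "of_int (a m) * phi = of_int (a m + int m) - frac (real m * phi) * (phi - 1)"
proof -
  have "of_int (a m) * phi = real m * (phi * phi) - frac (real m * phi) * phi"
    by (simp add: a_eq algebra_simps)
  also have "\<dots> = of_int (a m + int m) - frac (real m * phi) * (phi - 1)"
    by (simp add: phi_squared a_eq algebra_simps)
  finally show ?thesis .
qed

lemma frac_mult_phi_times_phi_minus_1:
  assumes "m > 0" shows "0 < frac (real m * phi) * (phi - 1)" "frac (real m * phi) * (phi - 1) < 1"
proof -
  have "frac (real m * phi) * (phi - 1) < 1 * 1"
    using phi_gt_1 phi_less_2 frac_lt_1 by (intro mult_strict_mono) auto
  then show "frac (real m * phi) * (phi - 1) < 1" by simp
  show "0 < frac (real m * phi) * (phi - 1)" using frac_mult_phi_pos[OF assms] phi_gt_1 by simp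
qed

lemma a_a:
  assumes "m > 0" shows "a (nat (a m)) = a m + int m - 1"
proof -
  have "real (nat (a m)) = of_int (a m)" using a_ge[of m] by simp
  then show ?thesis
    using a_mult_phi[of m] frac_mult_phi_times_phi_minus_1[OF assms]
    unfolding a_def[of "nat (a m)"] by (intro floor_unique) auto
qed

lemma frac_a_mult_phi:
  assumes "m > 0" shows "frac (real (nat (a m)) * phi) = 1 - frac (real m * phi) * (phi - 1)"
  using a_a[OF assms] a_eq[of "nat (a m)"] a_mult_phi[of m] a_ge[of m] by simp

lemma ex_a_eq_if_frac_mult_phi_ge:
  assumes "n > 0" "2 - phi \<le> frac (real n * phi)"
  shows "\<exists>m>0. a m = int n"
proof -
  define \<theta> where "\<theta> = frac (real n * phi)"
  have "\<theta> \<noteq> 2 - phi"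
  proof
    assume "\<theta> = 2 - phi"
    then have "real (Suc n) * phi = of_int (a n + 2)" by (simp add: a_eq \<theta>_def algebra_simps)
    then show False using of_nat_mult_phi_not_Ints[of "Suc n"] by simp
  qed
  with assms(2) have "phi * (1 - \<theta>) < phi * (phi - 1)" using phi_gt_1 by (simp add: \<theta>_def)
  also have "\<dots> = 1" using phi_squared by (simp add: algebra_simps)
  finally have lt: "phi * (1 - \<theta>) < 1" .
  have ge: "0 \<le> phi * (1 - \<theta>)"
    using phi_gt_1 frac_lt_1[of "real n * phi"] unfolding \<theta>_def by (intro mult_nonneg_nonneg) auto
  define m where "m = nat (a n - int n + 1)"
  have "real m * phi = (real n * phi - \<theta> - real n + 1) * phi"
    using a_ge[of n] by (simp add: m_def a_eq \<theta>_def)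
  also have "\<dots> = real n * (phi * phi - phi) + phi * (1 - \<theta>)" by (simp add: algebra_simps)
  also have "\<dots> = real n + phi * (1 - \<theta>)" by (simp add: phi_squared)
  finally have "real m * phi = real n + phi * (1 - \<theta>)" .
  then have "a m = int n" unfolding a_def using lt ge by (intro floor_unique) auto
  moreover have "m > 0" using a_ge[of n] by (simp add: m_def)
  ultimately show ?thesis by blast
qed

lemma frac_mult_phi_ge_iff:
  assumes "n > 0" shows "2 - phi \<le> frac (real n * phi) \<longleftrightarrow> (\<exists>m>0. a m = int n)"
proof
  assume "\<exists>m>0. a m = int n"
  then obtain m where "m > 0" "n = nat (a m)" by (metis nat_int)
  moreover have "frac (real m * phi) * (phi - 1) \<le> 1 * (phi - 1)"
    using frac_lt_1[of "real m * phi"] phi_gt_1 by (intro mult_right_mono) auto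
  ultimately show "2 - phi \<le> frac (real n * phi)" using frac_a_mult_phi[of m] by simp
qed (use assms ex_a_eq_if_frac_mult_phi_ge in blast)

lemma a_Suc_diff: "a (Suc n) - a n = (if \<exists>m>0. a m = int n then 2 else 1)"
proof (cases "n = 0")
  case True
  have "a m \<noteq> int n" if "m > 0" for m using a_ge[of m] that True by simp
  then show ?thesis using True a_Suc[of 0] phi_less_2 by auto
next
  case False
  then show ?thesis using a_Suc[of n] frac_mult_phi_ge_iff[of n] by auto
qed

lemma a_1: "a 1 = 1"
  using phi_gt_1 phi_less_2 by (simp add: a_def floor_eq_iff)

lemma a_Suc_a:
  assumes "m > 0" shows "a (Suc (nat (a m))) = a (nat (a m)) + 2"
proof -
  have "\<exists>m'>0. a m' = int (nat (a m))" using assms a_ge[of m] by (intro exI[of _ m]) auto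
  then show ?thesis using a_Suc_diff[of "nat (a m)"] by simp
qed

lemma f_conv_f_0: "f i j n = f i 0 n - j"
  by (simp add: f_def)

lemma f_1: "f i 0 1 = int (fib (i + 2))"
  unfolding f_def a_1 by (simp add: numeral_eq_Suc)

lemma f_Suc_diff: "f i 0 (Suc n) - f i 0 n = int (fib (Suc i)) * (a (Suc n) - a n) + int (fib i)"
  by (simp add: f_def algebra_simps)

lemma f_Suc_diff_ge: "int (fib (i + 2)) \<le> f i 0 (Suc n) - f i 0 n"
  using a_Suc_diff[of n] by (simp add: f_Suc_diff numeral_eq_Suc)

lemma f_Suc_a: "m > 0 \<Longrightarrow> f i 0 (Suc (nat (a m))) - f i 0 (nat (a m)) = int (fib (i + 3))"
  using a_Suc_a[of m] by (simp add: f_Suc_diff numeral_eq_Suc)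

lemma strict_mono_f: "strict_mono (f i 0)"
proof (unfold strict_mono_Suc_iff, intro allI)
  fix n
  have "0 < int (fib (i + 2))" using fib_neq_0_nat[of "i + 2"] by (simp only: of_nat_0_less_iff)
  then show "f i 0 n < f i 0 (Suc n)" using f_Suc_diff_ge[of i n] by linarith
qed

lemma f_Suc_index:
  assumes "m > 0" shows "f (Suc i) 0 m = f i 0 (nat (a m)) + int (fib (Suc i))"
proof -
  have "f i 0 (nat (a m)) = int (fib (Suc i)) * (a m + int m - 1) + int (fib i) * a m"
    using a_ge[of m] unfolding f_def a_a[OF assms] by simp
  then show ?thesis by (simp add: f_def algebra_simps)
qed

lemma strict_mono_interval_unique:
  fixes h :: "nat \<Rightarrow> 'a::linorder"
  assumes "strict_mono h" "h n \<le> x" "x < h (Suc n)" "h n' \<le> x" "x < h (Suc n')"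
  shows "n = n'"
proof (rule ccontr)
  assume "n \<noteq> n'"
  then have "Suc n \<le> n' \<or> Suc n' \<le> n" by linarith
  then show False
  proof
    assume "Suc n \<le> n'"
    then have "h (Suc n) \<le> h n'" by (rule strict_mono_leD[OF assms(1)])
    then show False using assms(3,4) by simp
  next
    assume "Suc n' \<le> n"
    then have "h (Suc n') \<le> h n" by (rule strict_mono_leD[OF assms(1)])
    then show False using assms(2,5) by simp
  qed
qed

lemma strict_mono_interval_exists:
  fixes h :: "nat \<Rightarrow> int"
  assumes "strict_mono h" "h 0 \<le> x"
  obtains n where "h n \<le> x" "x < h (Suc n)"
proof -
  have grows: "h 0 + int n \<le> h n" for n
  proof (induction n)
    case (Suc n)
    then show ?case using strict_monoD[OF assms(1), of n "Suc n"] by simp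
  qed simp
  define n where "n = (LEAST n. x < h (Suc n))"
  have "x < h (Suc (nat (x - h 0)))" using grows[of "Suc (nat (x - h 0))"] assms(2) by simp
  then have "x < h (Suc n)" unfolding n_def by (rule LeastI)
  moreover have "h n \<le> x"
  proof (cases n)
    case (Suc p)
    then have "p < (LEAST n. x < h (Suc n))" by (simp add: n_def)
    then have "\<not> x < h (Suc p)" by (rule not_less_Least)
    then show ?thesis using Suc by simp
  qed (use assms in simp)
  ultimately show ?thesis using that by blast
qed

definition partition_index :: "nat \<Rightarrow> (nat \<times> int) set" where
  "partition_index s = {(i, j). i \<in> {s, s + 1} \<and>
     - int (fib (i + 1)) \<ge> j \<and> j \<ge> 1 - int (fib (s + 3))}"

lemma partition_index_eq: "partition_index s =
    {s} \<times> {1 - int (fib (s + 3)) .. - int (fib (s + 1))} \<union>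
    {s + 1} \<times> {1 - int (fib (s + 3)) .. - int (fib (s + 2))}"
  by (auto simp: partition_index_def numeral_eq_Suc)

lemma card_partition_index: "card (partition_index s) = fib (s + 3)"
proof -
  have "card (partition_index s) =
      card {1 - int (fib (s + 3)) .. - int (fib (s + 1))} +
      card {1 - int (fib (s + 3)) .. - int (fib (s + 2))}"
    unfolding partition_index_eq by (subst card_Un_disjoint) (auto simp: card_cartesian_product)
  also have "\<dots> = fib (s + 3)" by (simp add: numeral_eq_Suc nat_add_distrib)
  finally show ?thesis .
qed

(* f i j n lies in the window of N = n (if i = s) or N = a n (if i = s + 1), at distance
   block_offset s (i, j) from f s 0 N. *)
definition block_offset :: "nat \<Rightarrow> nat \<times> int \<Rightarrow> int" where
  "block_offset s = (\<lambda>(i, j). (if i = s then 0 else int (fib (s + 1))) - j)"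

lemma inj_on_block_offset: "inj_on (block_offset s) (partition_index s)"
proof (rule inj_onI, clarify)
  fix i j i' j'
  assume "(i, j) \<in> partition_index s" "(i', j') \<in> partition_index s"
    and "block_offset s (i, j) = block_offset s (i', j')"
  then show "i = i' \<and> j = j'"
    by (auto simp: partition_index_def block_offset_def numeral_eq_Suc split: if_split_asm)
qed

lemma R_in_block:
  assumes "p \<in> partition_index s" "x \<in> R (fst p) (snd p)"
  obtains N where "N > 0" "x = f s 0 N + block_offset s p"
    "f s 0 N \<le> x - int (fib (s + 1))" "x - int (fib (s + 1)) < f s 0 (Suc N)"
proof -
  obtain i j where p: "p = (i, j)" by (cases p)
  obtain n where "n \<ge> 1" "x = f i j n" using assms(2) by (auto simp: R_def p)
  then have n: "n > 0" "x = f i 0 n - j" by (simp_all add: f_conv_f_0[of i j])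
  have fib3: "int (fib (s + 3)) = int (fib (s + 2)) + int (fib (s + 1))"
    by (simp add: numeral_eq_Suc)
  consider "i = s" "- int (fib (s + 1)) \<ge> j" "j \<ge> 1 - int (fib (s + 3))"
    | "i = s + 1" "- int (fib (s + 2)) \<ge> j" "j \<ge> 1 - int (fib (s + 3))"
    using assms(1) by (auto simp: partition_index_def numeral_eq_Suc p)
  then show ?thesis
  proof cases
    case 1
    have "int (fib (s + 2)) \<le> f s 0 (Suc n) - f s 0 n" by (rule f_Suc_diff_ge)
    with 1 n fib3 show ?thesis by (intro that[of n]) (simp_all add: block_offset_def p)
  next
    case 2
    define N where "N = nat (a n)"
    have "x = f s 0 N + int (fib (s + 1)) - j"
      using n 2(1) f_Suc_index[OF n(1), of s] by (simp add: N_def)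
    moreover have "f s 0 (Suc N) - f s 0 N = int (fib (s + 3))"
      using f_Suc_a[OF n(1)] by (simp add: N_def)
    moreover have "N > 0" using a_ge[of n] n(1) by (simp add: N_def)
    ultimately show ?thesis using 2 by (intro that[of N]) (simp_all add: block_offset_def p)
  qed
qed

lemma R_covers:
  assumes "int (fib (s + 3)) \<le> x"
  obtains p where "p \<in> partition_index s" "x \<in> R (fst p) (snd p)"
proof -
  have fib3: "int (fib (s + 3)) = int (fib (s + 2)) + int (fib (s + 1))"
    by (simp add: numeral_eq_Suc)
  have "f s 0 0 \<le> x - int (fib (s + 1))"
    using assms fib_mono[of "s + 1" "s + 3"] by (simp add: f_def a_def)
  with strict_mono_f obtain N
    where N: "f s 0 N \<le> x - int (fib (s + 1))" "x - int (fib (s + 1)) < f s 0 (Suc N)"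
    by (rule strict_mono_interval_exists)
  have "N \<noteq> 0" using N(2) assms fib3 f_1[of s] by (intro notI) simp
  define t where "t = x - f s 0 N"
  show ?thesis
  proof (cases "t < int (fib (s + 3))")
    case True
    then have "(s, - t) \<in> partition_index s" using N(1) by (simp add: partition_index_def t_def)
    moreover have "x = f s (- t) N" unfolding f_conv_f_0[of s "- t"] by (simp add: t_def)
    then have "x \<in> R s (- t)" using \<open>N \<noteq> 0\<close> by (auto simp: R_def)
    ultimately show ?thesis using that[of "(s, - t)"] by simp
  next
    case False
    then have "int (fib (s + 2)) < f s 0 (Suc N) - f s 0 N" using N(2) fib3 by (simp add: t_def)
    then have "a (Suc N) - a N \<noteq> 1" by (auto simp: f_Suc_diff numeral_eq_Suc)
    then obtain m where m: "m > 0" "a m = int N" using a_Suc_diff[of N] by (auto split: if_split_asm)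
    define j where "j = int (fib (s + 1)) - t"
    have "(s + 1, j) \<in> partition_index s"
      using False N(2) f_Suc_a[OF m(1), of s] m(2) fib3
      by (simp add: partition_index_def t_def j_def numeral_eq_Suc)
    moreover have "x = f (s + 1) j m"
      unfolding f_conv_f_0[of "s + 1" j] using f_Suc_index[OF m(1), of s] m(2) by (simp add: j_def t_def)
    then have "x \<in> R (s + 1) j" using m(1) by (auto simp: R_def)
    ultimately show ?thesis using that[of "(s + 1, j)"] by simp
  qed
qed

lemma R_partition_disjoint:
  assumes "p \<in> partition_index s" "q \<in> partition_index s"
    and "x \<in> R (fst p) (snd p)" "x \<in> R (fst q) (snd q)"
  shows "p = q"
proof -
  obtain N where N: "x = f s 0 N + block_offset s p"
    "f s 0 N \<le> x - int (fib (s + 1))" "x - int (fib (s + 1)) < f s 0 (Suc N)"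
    using assms(1,3) by (rule R_in_block)
  obtain N' where N': "x = f s 0 N' + block_offset s q"
    "f s 0 N' \<le> x - int (fib (s + 1))" "x - int (fib (s + 1)) < f s 0 (Suc N')"
    using assms(2,4) by (rule R_in_block)
  have "N = N'" using strict_mono_f N(2,3) N'(2,3) by (rule strict_mono_interval_unique)
  then have "block_offset s p = block_offset s q" using N(1) N'(1) by simp
  with inj_on_block_offset show "p = q" using assms(1,2) by (rule inj_onD)
qed

lemma R_partition_Union:
  "(\<Union>p\<in>partition_index s. R (fst p) (snd p)) = {x. int (fib (s + 3)) \<le> x}"
proof (intro equalityI subsetI)
  fix x assume "x \<in> (\<Union>p\<in>partition_index s. R (fst p) (snd p))"
  then obtain p where "p \<in> partition_index s" "x \<in> R (fst p) (snd p)" by blast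
  then obtain N where "N > 0" "f s 0 N \<le> x - int (fib (s + 1))" by (rule R_in_block)
  moreover have "f s 0 1 \<le> f s 0 N" using \<open>N > 0\<close> strict_mono_f by (simp add: strict_mono_leD)
  ultimately show "x \<in> {x. int (fib (s + 3)) \<le> x}" using f_1[of s] by (simp add: numeral_eq_Suc)
next
  fix x assume "x \<in> {x. int (fib (s + 3)) \<le> x}"
  then obtain p where "p \<in> partition_index s" "x \<in> R (fst p) (snd p)" by (auto elim: R_covers)
  then show "x \<in> (\<Union>p\<in>partition_index s. R (fst p) (snd p))" by blast
qed

theorem corollary3p9:
  fixes k :: nat
  assumes "k \<ge> 3"
  defines "I \<equiv> {(i :: nat, j :: int). i \<in> {k - 3, k - 2} \<and>
                   - int (fib (i + 1)) \<ge> j \<and> j \<ge> 1 - int (fib k)}"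
  shows "card I = fib k
    \<and> card ((\<lambda>(i, j). R i j) ` I) = fib k
    \<and> (\<forall>p\<in>I. \<forall>q\<in>I. p \<noteq> q \<longrightarrow> R (fst p) (snd p) \<inter> R (fst q) (snd q) = {})
    \<and> (\<Union>p\<in>I. R (fst p) (snd p)) = {n :: int. n \<ge> int (fib k)}"
proof -
  define s where "s = k - 3"
  have k: "k = s + 3" using assms(1) by (simp add: s_def)
  have I: "I = partition_index s" unfolding I_def partition_index_def k by (simp add: numeral_eq_Suc)
  have disjoint: "R (fst p) (snd p) \<inter> R (fst q) (snd q) = {}" if "p \<in> I" "q \<in> I" "p \<noteq> q" for p q
    using R_partition_disjoint[of p s q] that unfolding I by blast
  have "inj_on (\<lambda>(i, j). R i j) I"
  proof (rule inj_onI)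
    fix p q assume "p \<in> I" "q \<in> I" "(\<lambda>(i, j). R i j) p = (\<lambda>(i, j). R i j) q"
    moreover have "R (fst p) (snd p) \<noteq> {}" by (auto simp: R_def)
    ultimately show "p = q" using disjoint[of p q] by (auto simp: case_prod_beta)
  qed
  then show ?thesis
    using card_partition_index[of s] R_partition_Union[of s] disjoint
    by (simp add: card_image I k)
qed

end
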